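(* Let $i:\mathbb{A}\to\mathbb{B}$ be a virtual double functor which is fully faithful, injective on objects, and injective on loose arrows. Then $i$ is the equalizer of its cokernel pair $q_1,q_2:\mathbb{B}\rightrightarrows\mathbb{B}\cup_{\mathbb{A}}\mathbb{B}$; in particular $i$ is a regular monomorphism.
   Context: A virtual double category (VDC) has objects, tight arrows forming a category, loose arrows, and $n$-ary multicells from a composable path of $n$ loose arrows to a loose arrow with two tight sides, with identities and associative unital composition; a virtual double functor (VDF) preserves all structure strictly, and the category of VDCs and VDFs is cocomplete. A VDF $i:\mathbb{A}\to\mathbb{B}$ is fully faithful if it is fully faithful on underlying tight categories and, for every path $\varphi$ of loose arrows and loose arrow $\psi$ of $\mathbb{A}$, the induced map from multicells of $\mathbb{A}$ with loose source $\varphi$ and target $\psi$ to multicells of $\mathbb{B}$ with loose source $i(\varphi)$ and target $i(\psi)$ is a bijection. The cokernel pair is the pair of coprojections of the pushout $\mathbb{B}\cup_{\mathbb{A}}\mathbb{B}$ of $i$ along itself. *)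

theory Defs
  imports Main
begin

text \<open>A virtual double category with objects of type 'o, tight arrows 't,
loose arrows 'l and multicells 'c.  Carriers are explicit sets; all
operations are total functions that are only meaningful on the carriers.
  tcomp g f  is the tight composite  g after f.
  A multicell c has loose source path csrc c (a list of composable loose
  arrows), loose target ctgt c, left tight side cleft c and right tight side
  cright c.  The source path runs from tdom (cleft c) to tdom (cright c);
  the target runs from tcod (cleft c) to tcod (cright c).
  ccomp a f bs  composes a cell a with a path of cells (f, bs): bs is a
  list of cells whose targets form the source of a, and f is the leftmost
  tight arrow of the path (for a nullary a the cell path is just the tight
  arrow f, as in the fc-multicategory formulation).\<close>

record ('o, 't, 'l, 'c) vdc =
  Ob :: "'o set"
  Tt :: "'t set"
  tdom :: "'t \<Rightarrow> 'o"
  tcod :: "'t \<Rightarrow> 'o"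
  tid :: "'o \<Rightarrow> 't"
  tcomp :: "'t \<Rightarrow> 't \<Rightarrow> 't"
  Lo :: "'l set"
  lsrc :: "'l \<Rightarrow> 'o"
  ltgt :: "'l \<Rightarrow> 'o"
  Ce :: "'c set"
  csrc :: "'c \<Rightarrow> 'l list"
  ctgt :: "'c \<Rightarrow> 'l"
  cleft :: "'c \<Rightarrow> 't"
  cright :: "'c \<Rightarrow> 't"
  cid :: "'l \<Rightarrow> 'c"
  ccomp :: "'c \<Rightarrow> 't \<Rightarrow> 'c list \<Rightarrow> 'c"

fun lpath :: "('o, 't, 'l, 'c) vdc \<Rightarrow> 'o \<Rightarrow> 'l list \<Rightarrow> 'o \<Rightarrow> bool" where
  "lpath V a [] b = (a \<in> Ob V \<and> a = b)"
| "lpath V a (p # ps) b = (p \<in> Lo V \<and> lsrc V p = a \<and> lpath V (ltgt V p) ps b)"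

fun cpath :: "('o, 't, 'l, 'c) vdc \<Rightarrow> 't \<Rightarrow> 'c list \<Rightarrow> 't \<Rightarrow> bool" where
  "cpath V f [] g = (f \<in> Tt V \<and> g = f)"
| "cpath V f (b # bs) g = (b \<in> Ce V \<and> cleft V b = f \<and> cpath V (cright V b) bs g)"

definition pright :: "('o, 't, 'l, 'c) vdc \<Rightarrow> 't \<Rightarrow> 'c list \<Rightarrow> 't" where
  "pright V f bs = (if bs = [] then f else cright V (last bs))"

definition composable :: "('o, 't, 'l, 'c) vdc \<Rightarrow> 'c \<Rightarrow> 't \<Rightarrow> 'c list \<Rightarrow> bool" where
  "composable V a f bs \<longleftrightarrow>
     a \<in> Ce V \<and> cpath V f bs (pright V f bs) \<and> map (ctgt V) bs = csrc V a \<and>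
     tcod V f = tdom V (cleft V a) \<and> tcod V (pright V f bs) = tdom V (cright V a)"

fun pcomp :: "('o, 't, 'l, 'c) vdc \<Rightarrow> 'c list \<Rightarrow> 't \<Rightarrow> 'c list \<Rightarrow> 'c list" where
  "pcomp V [] g cs = []"
| "pcomp V (b # bs) g cs =
     (let k = length (csrc V b); ch = take k cs in
      ccomp V b g ch # pcomp V bs (pright V g ch) (drop k cs))"

fun pcompat :: "('o, 't, 'l, 'c) vdc \<Rightarrow> 'c list \<Rightarrow> 't \<Rightarrow> 'c list \<Rightarrow> bool" where
  "pcompat V [] g cs = (cs = [])"
| "pcompat V (b # bs) g cs =
     (let k = length (csrc V b); ch = take k cs in
      k \<le> length cs \<and> composable V b g ch \<and> pcompat V bs (pright V g ch) (drop k cs))"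

definition is_vdc :: "('o, 't, 'l, 'c) vdc \<Rightarrow> bool" where
  "is_vdc V \<longleftrightarrow>
    \<comment> \<open>tight category\<close>
    (\<forall>f \<in> Tt V. tdom V f \<in> Ob V \<and> tcod V f \<in> Ob V) \<and>
    (\<forall>a \<in> Ob V. tid V a \<in> Tt V \<and> tdom V (tid V a) = a \<and> tcod V (tid V a) = a) \<and>
    (\<forall>f \<in> Tt V. \<forall>g \<in> Tt V. tcod V f = tdom V g \<longrightarrow>
        tcomp V g f \<in> Tt V \<and> tdom V (tcomp V g f) = tdom V f \<and> tcod V (tcomp V g f) = tcod V g) \<and>
    (\<forall>f \<in> Tt V. tcomp V f (tid V (tdom V f)) = f \<and> tcomp V (tid V (tcod V f)) f = f) \<and>
    (\<forall>f \<in> Tt V. \<forall>g \<in> Tt V. \<forall>h \<in> Tt V. tcod V f = tdom V g \<longrightarrow> tcod V g = tdom V h \<longrightarrow>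
        tcomp V h (tcomp V g f) = tcomp V (tcomp V h g) f) \<and>
    \<comment> \<open>loose arrows\<close>
    (\<forall>p \<in> Lo V. lsrc V p \<in> Ob V \<and> ltgt V p \<in> Ob V) \<and>
    \<comment> \<open>boundaries of multicells\<close>
    (\<forall>c \<in> Ce V. cleft V c \<in> Tt V \<and> cright V c \<in> Tt V \<and>
        lpath V (tdom V (cleft V c)) (csrc V c) (tdom V (cright V c)) \<and>
        ctgt V c \<in> Lo V \<and> lsrc V (ctgt V c) = tcod V (cleft V c) \<and>
        ltgt V (ctgt V c) = tcod V (cright V c)) \<and>
    \<comment> \<open>identity cells\<close>
    (\<forall>p \<in> Lo V. cid V p \<in> Ce V \<and> csrc V (cid V p) = [p] \<and> ctgt V (cid V p) = p \<and>
        cleft V (cid V p) = tid V (lsrc V p) \<and> cright V (cid V p) = tid V (ltgt V p)) \<and>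
    \<comment> \<open>composition of multicells\<close>
    (\<forall>a f bs. composable V a f bs \<longrightarrow>
        ccomp V a f bs \<in> Ce V \<and>
        csrc V (ccomp V a f bs) = concat (map (csrc V) bs) \<and>
        ctgt V (ccomp V a f bs) = ctgt V a \<and>
        cleft V (ccomp V a f bs) = tcomp V (cleft V a) f \<and>
        cright V (ccomp V a f bs) = tcomp V (cright V a) (pright V f bs)) \<and>
    \<comment> \<open>unit laws\<close>
    (\<forall>a \<in> Ce V. ccomp V a (tid V (tdom V (cleft V a))) (map (cid V) (csrc V a)) = a) \<and>
    (\<forall>b \<in> Ce V. ccomp V (cid V (ctgt V b)) (cleft V b) [b] = b) \<and>
    \<comment> \<open>associativity\<close>
    (\<forall>a f bs g cs. composable V a f bs \<longrightarrow> pcompat V bs g cs \<longrightarrow>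
        composable V (ccomp V a f bs) g cs \<longrightarrow>
        ccomp V (ccomp V a f bs) g cs = ccomp V a (tcomp V f g) (pcomp V bs g cs))"

record ('ao, 'at, 'al, 'ac, 'bo, 'bt, 'bl, 'bc) vdf =
  fo :: "'ao \<Rightarrow> 'bo"
  ft :: "'at \<Rightarrow> 'bt"
  fl :: "'al \<Rightarrow> 'bl"
  fc :: "'ac \<Rightarrow> 'bc"

definition is_vdf ::
  "('ao, 'at, 'al, 'ac) vdc \<Rightarrow> ('bo, 'bt, 'bl, 'bc) vdc \<Rightarrow>
   ('ao, 'at, 'al, 'ac, 'bo, 'bt, 'bl, 'bc) vdf \<Rightarrow> bool" where
  "is_vdf A B F \<longleftrightarrow> is_vdc A \<and> is_vdc B \<and>
    (\<forall>a \<in> Ob A. fo F a \<in> Ob B) \<and>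
    (\<forall>f \<in> Tt A. ft F f \<in> Tt B \<and> tdom B (ft F f) = fo F (tdom A f) \<and> tcod B (ft F f) = fo F (tcod A f)) \<and>
    (\<forall>a \<in> Ob A. ft F (tid A a) = tid B (fo F a)) \<and>
    (\<forall>f \<in> Tt A. \<forall>g \<in> Tt A. tcod A f = tdom A g \<longrightarrow> ft F (tcomp A g f) = tcomp B (ft F g) (ft F f)) \<and>
    (\<forall>p \<in> Lo A. fl F p \<in> Lo B \<and> lsrc B (fl F p) = fo F (lsrc A p) \<and> ltgt B (fl F p) = fo F (ltgt A p)) \<and>
    (\<forall>c \<in> Ce A. fc F c \<in> Ce B \<and> csrc B (fc F c) = map (fl F) (csrc A c) \<and>
        ctgt B (fc F c) = fl F (ctgt A c) \<and> cleft B (fc F c) = ft F (cleft A c) \<and>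
        cright B (fc F c) = ft F (cright A c)) \<and>
    (\<forall>p \<in> Lo A. fc F (cid A p) = cid B (fl F p)) \<and>
    (\<forall>a f bs. composable A a f bs \<longrightarrow>
        fc F (ccomp A a f bs) = ccomp B (fc F a) (ft F f) (map (fc F) bs))"

definition vdf_comp ::
  "('bo, 'bt, 'bl, 'bc, 'co, 'ct, 'cl, 'cc) vdf \<Rightarrow> ('ao, 'at, 'al, 'ac, 'bo, 'bt, 'bl, 'bc) vdf \<Rightarrow>
   ('ao, 'at, 'al, 'ac, 'co, 'ct, 'cl, 'cc) vdf" where
  "vdf_comp G F = \<lparr>fo = fo G \<circ> fo F, ft = ft G \<circ> ft F, fl = fl G \<circ> fl F, fc = fc G \<circ> fc F\<rparr>"

definition vdf_eq ::
  "('ao, 'at, 'al, 'ac) vdc \<Rightarrow> ('ao, 'at, 'al, 'ac, 'bo, 'bt, 'bl, 'bc) vdf \<Rightarrow>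
   ('ao, 'at, 'al, 'ac, 'bo, 'bt, 'bl, 'bc) vdf \<Rightarrow> bool" where
  "vdf_eq A F G \<longleftrightarrow>
    (\<forall>a \<in> Ob A. fo F a = fo G a) \<and> (\<forall>f \<in> Tt A. ft F f = ft G f) \<and>
    (\<forall>p \<in> Lo A. fl F p = fl G p) \<and> (\<forall>c \<in> Ce A. fc F c = fc G c)"

definition fully_faithful ::
  "('ao, 'at, 'al, 'ac) vdc \<Rightarrow> ('bo, 'bt, 'bl, 'bc) vdc \<Rightarrow>
   ('ao, 'at, 'al, 'ac, 'bo, 'bt, 'bl, 'bc) vdf \<Rightarrow> bool" where
  "fully_faithful A B F \<longleftrightarrow>
    (\<forall>a \<in> Ob A. \<forall>a' \<in> Ob A.
       bij_betw (ft F) {f \<in> Tt A. tdom A f = a \<and> tcod A f = a'}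
                       {g \<in> Tt B. tdom B g = fo F a \<and> tcod B g = fo F a'}) \<and>
    (\<forall>a a' phi psi. lpath A a phi a' \<longrightarrow> psi \<in> Lo A \<longrightarrow>
       bij_betw (fc F)
         {c \<in> Ce A. csrc A c = phi \<and> tdom A (cleft A c) = a \<and> ctgt A c = psi}
         {d \<in> Ce B. csrc B d = map (fl F) phi \<and> tdom B (cleft B d) = fo F a \<and> ctgt B d = fl F psi})"

definition inj_on_objects ::
  "('ao, 'at, 'al, 'ac) vdc \<Rightarrow> ('ao, 'at, 'al, 'ac, 'bo, 'bt, 'bl, 'bc) vdf \<Rightarrow> bool" where
  "inj_on_objects A F \<longleftrightarrow> inj_on (fo F) (Ob A)"

definition inj_on_loose ::
  "('ao, 'at, 'al, 'ac) vdc \<Rightarrow> ('ao, 'at, 'al, 'ac, 'bo, 'bt, 'bl, 'bc) vdf \<Rightarrow> bool" where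
  "inj_on_loose A F \<longleftrightarrow> inj_on (fl F) (Lo A)"

text \<open>Test universe for the universal property of the pushout B +_A B: a type
large enough to carry (an isomorphic copy of) the pushout constructed from
formal composites of the data of B.\<close>
type_synonym ('bo, 'bt, 'bl, 'bc) univ = "('bo + 'bt + 'bl + 'bc + nat) list set"

definition is_cokernel_pair ::
  "('ao, 'at, 'al, 'ac) vdc \<Rightarrow> ('bo, 'bt, 'bl, 'bc) vdc \<Rightarrow>
   ('ao, 'at, 'al, 'ac, 'bo, 'bt, 'bl, 'bc) vdf \<Rightarrow>
   ('co, 'ct, 'cl, 'cc) vdc \<Rightarrow>
   ('bo, 'bt, 'bl, 'bc, 'co, 'ct, 'cl, 'cc) vdf \<Rightarrow>
   ('bo, 'bt, 'bl, 'bc, 'co, 'ct, 'cl, 'cc) vdf \<Rightarrow> bool" where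
  "is_cokernel_pair A B i C q1 q2 \<longleftrightarrow>
    is_vdf A B i \<and> is_vdf B C q1 \<and> is_vdf B C q2 \<and>
    vdf_eq A (vdf_comp q1 i) (vdf_comp q2 i) \<and>
    (\<forall>(D :: (('bo, 'bt, 'bl, 'bc) univ, ('bo, 'bt, 'bl, 'bc) univ,
              ('bo, 'bt, 'bl, 'bc) univ, ('bo, 'bt, 'bl, 'bc) univ) vdc) r1 r2.
        is_vdf B D r1 \<longrightarrow> is_vdf B D r2 \<longrightarrow> vdf_eq A (vdf_comp r1 i) (vdf_comp r2 i) \<longrightarrow>
        (\<exists>h. is_vdf C D h \<and> vdf_eq B (vdf_comp h q1) r1 \<and> vdf_eq B (vdf_comp h q2) r2 \<and>
             (\<forall>h'. is_vdf C D h' \<longrightarrow> vdf_eq B (vdf_comp h' q1) r1 \<longrightarrow>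
                   vdf_eq B (vdf_comp h' q2) r2 \<longrightarrow> vdf_eq C h h')))"

definition equalizer_test ::
  "('ao, 'at, 'al, 'ac) vdc \<Rightarrow> ('bo, 'bt, 'bl, 'bc) vdc \<Rightarrow>
   ('ao, 'at, 'al, 'ac, 'bo, 'bt, 'bl, 'bc) vdf \<Rightarrow>
   ('bo, 'bt, 'bl, 'bc, 'co, 'ct, 'cl, 'cc) vdf \<Rightarrow>
   ('bo, 'bt, 'bl, 'bc, 'co, 'ct, 'cl, 'cc) vdf \<Rightarrow>
   ('xo, 'xt, 'xl, 'xc) vdc \<Rightarrow> bool" where
  "equalizer_test A B i q1 q2 X \<longleftrightarrow>
    (\<forall>f. is_vdf X B f \<longrightarrow> vdf_eq X (vdf_comp q1 f) (vdf_comp q2 f) \<longrightarrow>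
       (\<exists>h. is_vdf X A h \<and> vdf_eq X (vdf_comp i h) f \<and>
            (\<forall>h'. is_vdf X A h' \<longrightarrow> vdf_eq X (vdf_comp i h') f \<longrightarrow> vdf_eq X h h')))"

end

(*
  If q1 f = q2 f, then f lands in the image of i on objects and loose arrows. To see this, test the
  cokernel pair against a codiscrete VDC: the two functors from B into it that label objects and
  loose arrows in the image of i by 0 and all others by 1, resp. 2, agree on i, so they are h q1
  and h q2 for some h; hence q1 and q2 agree only on the image of i. A functor landing in that image
  lifts along i: on objects and loose arrows because i is injective there, on tight arrows and cells
  because i is bijective on those with a prescribed boundary. Since i is faithful, the lift is
  functorial and unique.
*)
theory Submission
  imports Defs
begin

lemma vdc_tight_ends:
  "is_vdc V \<Longrightarrow> f \<in> Tt V \<Longrightarrow> tdom V f \<in> Ob V \<and> tcod V f \<in> Ob V"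
  unfolding is_vdc_def by (elim conjE) blast

lemma vdc_tid:
  "is_vdc V \<Longrightarrow> a \<in> Ob V \<Longrightarrow> tid V a \<in> Tt V \<and> tdom V (tid V a) = a \<and> tcod V (tid V a) = a"
  unfolding is_vdc_def by (elim conjE) blast

lemma vdc_tcomp:
  "is_vdc V \<Longrightarrow> f \<in> Tt V \<Longrightarrow> g \<in> Tt V \<Longrightarrow> tcod V f = tdom V g \<Longrightarrow>
   tcomp V g f \<in> Tt V \<and> tdom V (tcomp V g f) = tdom V f \<and> tcod V (tcomp V g f) = tcod V g"
  unfolding is_vdc_def by (elim conjE) blast

lemma vdc_loose_ends:
  "is_vdc V \<Longrightarrow> p \<in> Lo V \<Longrightarrow> lsrc V p \<in> Ob V \<and> ltgt V p \<in> Ob V"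
  unfolding is_vdc_def by (elim conjE) blast

lemma vdc_cell_boundary:
  "is_vdc V \<Longrightarrow> c \<in> Ce V \<Longrightarrow> cleft V c \<in> Tt V \<and> cright V c \<in> Tt V \<and>
   lpath V (tdom V (cleft V c)) (csrc V c) (tdom V (cright V c)) \<and> ctgt V c \<in> Lo V \<and>
   lsrc V (ctgt V c) = tcod V (cleft V c) \<and> ltgt V (ctgt V c) = tcod V (cright V c)"
  unfolding is_vdc_def by (elim conjE) blast

lemma vdc_cid:
  "is_vdc V \<Longrightarrow> p \<in> Lo V \<Longrightarrow> cid V p \<in> Ce V \<and> csrc V (cid V p) = [p] \<and> ctgt V (cid V p) = p \<and>
   cleft V (cid V p) = tid V (lsrc V p) \<and> cright V (cid V p) = tid V (ltgt V p)"
  unfolding is_vdc_def by (elim conjE) blast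

lemma vdc_ccomp:
  "is_vdc V \<Longrightarrow> composable V a f bs \<Longrightarrow> ccomp V a f bs \<in> Ce V \<and>
   csrc V (ccomp V a f bs) = concat (map (csrc V) bs) \<and> ctgt V (ccomp V a f bs) = ctgt V a \<and>
   cleft V (ccomp V a f bs) = tcomp V (cleft V a) f \<and>
   cright V (ccomp V a f bs) = tcomp V (cright V a) (pright V f bs)"
  unfolding is_vdc_def by (elim conjE) blast

lemma is_vdf_is_vdc: "is_vdf A B F \<Longrightarrow> is_vdc A \<and> is_vdc B"
  unfolding is_vdf_def by blast

lemma vdf_tid: "is_vdf A B F \<Longrightarrow> a \<in> Ob A \<Longrightarrow> ft F (tid A a) = tid B (fo F a)"
  unfolding is_vdf_def by (elim conjE) blast

lemma vdf_tcomp: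
  "is_vdf A B F \<Longrightarrow> f \<in> Tt A \<Longrightarrow> g \<in> Tt A \<Longrightarrow> tcod A f = tdom A g \<Longrightarrow>
   ft F (tcomp A g f) = tcomp B (ft F g) (ft F f)"
  unfolding is_vdf_def by (elim conjE) blast

lemma vdf_cid: "is_vdf A B F \<Longrightarrow> p \<in> Lo A \<Longrightarrow> fc F (cid A p) = cid B (fl F p)"
  unfolding is_vdf_def by (elim conjE) blast

lemma vdf_ccomp:
  "is_vdf A B F \<Longrightarrow> composable A a f bs \<Longrightarrow>
   fc F (ccomp A a f bs) = ccomp B (fc F a) (ft F f) (map (fc F) bs)"
  unfolding is_vdf_def by (elim conjE) blast

lemma lpath_in_carriers:
  "is_vdc V \<Longrightarrow> lpath V x ps y \<Longrightarrow> x \<in> Ob V \<and> y \<in> Ob V \<and> set ps \<subseteq> Lo V"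
  by (induction ps arbitrary: x) (auto dest: vdc_loose_ends)

lemma lpath_end_unique: "lpath V x ps y \<Longrightarrow> lpath V x ps y' \<Longrightarrow> y = y'"
  by (induction ps arbitrary: x) auto

lemma cpath_in_carriers:
  "is_vdc V \<Longrightarrow> cpath V f bs g \<Longrightarrow> f \<in> Tt V \<and> g \<in> Tt V \<and> set bs \<subseteq> Ce V"
  by (induction bs arbitrary: f) (auto dest: vdc_cell_boundary)

lemma tdom_cleft_ccomp:
  assumes V: "is_vdc V" and c: "composable V a f bs"
  shows "tdom V (cleft V (ccomp V a f bs)) = tdom V f"
proof -
  from c have "f \<in> Tt V" and "cleft V a \<in> Tt V" and "tcod V f = tdom V (cleft V a)"
    using cpath_in_carriers[OF V] vdc_cell_boundary[OF V] by (auto simp: composable_def)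
  then show ?thesis
    using vdc_tcomp[OF V] vdc_ccomp[OF V c] by simp
qed

definition preserves_boundaries ::
  "('ao, 'at, 'al, 'ac) vdc \<Rightarrow> ('bo, 'bt, 'bl, 'bc) vdc \<Rightarrow>
   ('ao, 'at, 'al, 'ac, 'bo, 'bt, 'bl, 'bc) vdf \<Rightarrow> bool" where
  "preserves_boundaries A B F \<longleftrightarrow>
    (\<forall>a \<in> Ob A. fo F a \<in> Ob B) \<and>
    (\<forall>f \<in> Tt A. ft F f \<in> Tt B \<and> tdom B (ft F f) = fo F (tdom A f) \<and> tcod B (ft F f) = fo F (tcod A f)) \<and>
    (\<forall>p \<in> Lo A. fl F p \<in> Lo B \<and> lsrc B (fl F p) = fo F (lsrc A p) \<and> ltgt B (fl F p) = fo F (ltgt A p)) \<and>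
    (\<forall>c \<in> Ce A. fc F c \<in> Ce B \<and> csrc B (fc F c) = map (fl F) (csrc A c) \<and>
        ctgt B (fc F c) = fl F (ctgt A c) \<and> cleft B (fc F c) = ft F (cleft A c) \<and>
        cright B (fc F c) = ft F (cright A c))"

lemma is_vdf_preserves_boundaries: "is_vdf A B F \<Longrightarrow> preserves_boundaries A B F"
  unfolding is_vdf_def preserves_boundaries_def by (elim conjE) (intro conjI; assumption)

context
  fixes A B F
  assumes F: "preserves_boundaries A B F"
begin

lemma preserves_obj: "a \<in> Ob A \<Longrightarrow> fo F a \<in> Ob B"
  using F unfolding preserves_boundaries_def by blast

lemma preserves_tight:
  "f \<in> Tt A \<Longrightarrow> ft F f \<in> Tt B \<and> tdom B (ft F f) = fo F (tdom A f) \<and> tcod B (ft F f) = fo F (tcod A f)"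
  using F unfolding preserves_boundaries_def by blast

lemma preserves_loose:
  "p \<in> Lo A \<Longrightarrow> fl F p \<in> Lo B \<and> lsrc B (fl F p) = fo F (lsrc A p) \<and> ltgt B (fl F p) = fo F (ltgt A p)"
  using F unfolding preserves_boundaries_def by blast

lemma preserves_cell:
  "c \<in> Ce A \<Longrightarrow> fc F c \<in> Ce B \<and> csrc B (fc F c) = map (fl F) (csrc A c) \<and>
     ctgt B (fc F c) = fl F (ctgt A c) \<and> cleft B (fc F c) = ft F (cleft A c) \<and>
     cright B (fc F c) = ft F (cright A c)"
  using F unfolding preserves_boundaries_def by blast

lemma cpath_map: "cpath A f bs g \<Longrightarrow> cpath B (ft F f) (map (fc F) bs) (ft F g)"
proof (induction bs arbitrary: f)
  case Nil then show ?case using preserves_tight by simp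
next
  case (Cons b bs) then show ?case using preserves_cell[of b] by simp
qed

lemma pright_map:
  assumes "set bs \<subseteq> Ce A"
  shows "pright B (ft F f) (map (fc F) bs) = ft F (pright A f bs)"
proof (cases "bs = []")
  case False
  then have "last bs \<in> Ce A" using assms by auto
  then show ?thesis using False preserves_cell by (simp add: pright_def last_map)
qed (simp add: pright_def)

lemma composable_map:
  assumes A: "is_vdc A" and c: "composable A a f bs"
  shows "composable B (fc F a) (ft F f) (map (fc F) bs)"
proof -
  from c have a: "a \<in> Ce A" and cp: "cpath A f bs (pright A f bs)"
    and src: "map (ctgt A) bs = csrc A a" and left: "tcod A f = tdom A (cleft A a)"
    and right: "tcod A (pright A f bs) = tdom A (cright A a)"
    by (auto simp: composable_def)
  from cpath_in_carriers[OF A cp] have f: "f \<in> Tt A" and g: "pright A f bs \<in> Tt A"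
    and bs: "set bs \<subseteq> Ce A"
    by auto
  have sides: "cleft A a \<in> Tt A" "cright A a \<in> Tt A"
    using vdc_cell_boundary[OF A a] by auto
  have "tcod B (ft F f) = tdom B (cleft B (fc F a))"
    using preserves_tight[OF f] preserves_tight[OF sides(1)] preserves_cell[OF a] left by simp
  moreover have "tcod B (ft F (pright A f bs)) = tdom B (cright B (fc F a))"
    using preserves_tight[OF g] preserves_tight[OF sides(2)] preserves_cell[OF a] right by simp
  moreover have "map (ctgt B) (map (fc F) bs) = csrc B (fc F a)"
  proof -
    have "map (ctgt B) (map (fc F) bs) = map (fl F) (map (ctgt A) bs)"
      using bs preserves_cell by auto
    then show ?thesis using preserves_cell[OF a] src by simp
  qed
  ultimately show ?thesis
    using preserves_cell[OF a] cpath_map[OF cp] by (simp add: composable_def pright_map[OF bs])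
qed

end

definition faithful ::
  "('ao, 'at, 'al, 'ac) vdc \<Rightarrow> ('ao, 'at, 'al, 'ac, 'bo, 'bt, 'bl, 'bc) vdf \<Rightarrow> bool" where
  "faithful A F \<longleftrightarrow>
    (\<forall>g \<in> Tt A. \<forall>g' \<in> Tt A. tdom A g = tdom A g' \<longrightarrow> tcod A g = tcod A g' \<longrightarrow>
       ft F g = ft F g' \<longrightarrow> g = g') \<and>
    (\<forall>d \<in> Ce A. \<forall>d' \<in> Ce A. csrc A d = csrc A d' \<longrightarrow> tdom A (cleft A d) = tdom A (cleft A d') \<longrightarrow>
       ctgt A d = ctgt A d' \<longrightarrow> fc F d = fc F d' \<longrightarrow> d = d')"

lemma faithful_tightD:
  "faithful A F \<Longrightarrow> g \<in> Tt A \<Longrightarrow> g' \<in> Tt A \<Longrightarrow>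
   tdom A g = tdom A g' \<Longrightarrow> tcod A g = tcod A g' \<Longrightarrow> ft F g = ft F g' \<Longrightarrow> g = g'"
  unfolding faithful_def by (elim conjE) ((drule bspec, assumption)+, simp)

lemma faithful_cellD:
  "faithful A F \<Longrightarrow> d \<in> Ce A \<Longrightarrow> d' \<in> Ce A \<Longrightarrow> csrc A d = csrc A d' \<Longrightarrow>
   tdom A (cleft A d) = tdom A (cleft A d') \<Longrightarrow> ctgt A d = ctgt A d' \<Longrightarrow> fc F d = fc F d' \<Longrightarrow> d = d'"
  unfolding faithful_def by (elim conjE) ((drule bspec, assumption)+, simp)

lemma fully_faithful_faithful:
  assumes A: "is_vdc A" and ff: "fully_faithful A B F"
  shows "faithful A F"
  unfolding faithful_def
proof (intro conjI ballI impI)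
  fix g g' assume g: "g \<in> Tt A" "g' \<in> Tt A" "tdom A g = tdom A g'" "tcod A g = tcod A g'"
    and "ft F g = ft F g'"
  have "inj_on (ft F) {h \<in> Tt A. tdom A h = tdom A g \<and> tcod A h = tcod A g}"
    using ff vdc_tight_ends[OF A g(1)] unfolding fully_faithful_def bij_betw_def by blast
  from inj_onD[OF this \<open>ft F g = ft F g'\<close>] show "g = g'" using g by simp
next
  fix d d' assume d: "d \<in> Ce A" "d' \<in> Ce A" "csrc A d = csrc A d'"
    "tdom A (cleft A d) = tdom A (cleft A d')" "ctgt A d = ctgt A d'" and "fc F d = fc F d'"
  have "lpath A (tdom A (cleft A d)) (csrc A d) (tdom A (cright A d))" "ctgt A d \<in> Lo A"
    using vdc_cell_boundary[OF A d(1)] by auto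
  then have "inj_on (fc F)
      {c \<in> Ce A. csrc A c = csrc A d \<and> tdom A (cleft A c) = tdom A (cleft A d) \<and> ctgt A c = ctgt A d}"
    using ff unfolding fully_faithful_def bij_betw_def by blast
  from inj_onD[OF this \<open>fc F d = fc F d'\<close>] show "d = d'" using d by simp
qed

lemma fully_faithful_tight_surj:
  assumes "fully_faithful A B F" "a \<in> Ob A" "a' \<in> Ob A"
    and "g \<in> Tt B" "tdom B g = fo F a" "tcod B g = fo F a'"
  shows "\<exists>g'. g' \<in> Tt A \<and> tdom A g' = a \<and> tcod A g' = a' \<and> ft F g' = g"
proof -
  let ?S = "{h \<in> Tt A. tdom A h = a \<and> tcod A h = a'}"
  have "ft F ` ?S = {g \<in> Tt B. tdom B g = fo F a \<and> tcod B g = fo F a'}"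
    using assms(1-3) unfolding fully_faithful_def bij_betw_def by blast
  moreover have "g \<in> {g \<in> Tt B. tdom B g = fo F a \<and> tcod B g = fo F a'}"
    using assms(4-6) by simp
  ultimately have "g \<in> ft F ` ?S" by (simp only:)
  then show ?thesis by (auto elim: imageE)
qed

lemma fully_faithful_cell_surj:
  assumes "fully_faithful A B F" "lpath A a phi a'" "psi \<in> Lo A"
    and "d \<in> Ce B" "csrc B d = map (fl F) phi" "tdom B (cleft B d) = fo F a" "ctgt B d = fl F psi"
  shows "\<exists>d'. d' \<in> Ce A \<and> csrc A d' = phi \<and> tdom A (cleft A d') = a \<and> ctgt A d' = psi \<and> fc F d' = d"
proof -
  let ?S = "{c \<in> Ce A. csrc A c = phi \<and> tdom A (cleft A c) = a \<and> ctgt A c = psi}"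
  have "fc F ` ?S =
     {d \<in> Ce B. csrc B d = map (fl F) phi \<and> tdom B (cleft B d) = fo F a \<and> ctgt B d = fl F psi}"
  proof -
    have "bij_betw (fc F) ?S
      {d \<in> Ce B. csrc B d = map (fl F) phi \<and> tdom B (cleft B d) = fo F a \<and> ctgt B d = fl F psi}"
      using assms(1-3) unfolding fully_faithful_def by blast
    then show ?thesis unfolding bij_betw_def by (elim conjE)
  qed
  moreover have
    "d \<in> {d \<in> Ce B. csrc B d = map (fl F) phi \<and> tdom B (cleft B d) = fo F a \<and> ctgt B d = fl F psi}"
    using assms(4-7) by simp
  ultimately have "d \<in> fc F ` ?S" by (simp only:)
  then show ?thesis by (auto elim: imageE)
qed

section \<open>Faithful functors reflect functoriality and are monic\<close>

locale faithful_factorization =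
  fixes A :: "('ao, 'at, 'al, 'ac) vdc" and B :: "('bo, 'bt, 'bl, 'bc) vdc"
    and X :: "('xo, 'xt, 'xl, 'xc) vdc"
    and i :: "('ao, 'at, 'al, 'ac, 'bo, 'bt, 'bl, 'bc) vdf"
    and f :: "('xo, 'xt, 'xl, 'xc, 'bo, 'bt, 'bl, 'bc) vdf"
    and h :: "('xo, 'xt, 'xl, 'xc, 'ao, 'at, 'al, 'ac) vdf"
  assumes i: "is_vdf A B i" and faithful: "faithful A i" and f: "is_vdf X B f"
    and h: "preserves_boundaries X A h" and factors: "vdf_eq X (vdf_comp i h) f"
begin

lemma A: "is_vdc A" and X: "is_vdc X"
  using is_vdf_is_vdc i f by auto

lemma factors_obj: "x \<in> Ob X \<Longrightarrow> fo i (fo h x) = fo f x"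
  and factors_tight: "u \<in> Tt X \<Longrightarrow> ft i (ft h u) = ft f u"
  and factors_loose: "p \<in> Lo X \<Longrightarrow> fl i (fl h p) = fl f p"
  and factors_cell: "c \<in> Ce X \<Longrightarrow> fc i (fc h c) = fc f c"
  using factors by (simp_all add: vdf_eq_def vdf_comp_def)

lemma h_preserves_tid:
  assumes x: "x \<in> Ob X"
  shows "ft h (tid X x) = tid A (fo h x)"
proof (rule faithful_tightD[OF faithful])
  have t: "tid X x \<in> Tt X" "tdom X (tid X x) = x" "tcod X (tid X x) = x"
    using vdc_tid[OF X x] by auto
  have hx: "fo h x \<in> Ob A" using preserves_obj[OF h x] .
  have t': "tid A (fo h x) \<in> Tt A" "tdom A (tid A (fo h x)) = fo h x" "tcod A (tid A (fo h x)) = fo h x"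
    using vdc_tid[OF A hx] by auto
  show "ft h (tid X x) \<in> Tt A" "tid A (fo h x) \<in> Tt A"
    "tdom A (ft h (tid X x)) = tdom A (tid A (fo h x))" "tcod A (ft h (tid X x)) = tcod A (tid A (fo h x))"
    using preserves_tight[OF h t(1)] t t' by simp_all
  have "ft i (ft h (tid X x)) = tid B (fo f x)"
    using factors_tight[OF t(1)] vdf_tid[OF f x] by simp
  also have "\<dots> = ft i (tid A (fo h x))"
    using vdf_tid[OF i hx] factors_obj[OF x] by simp
  finally show "ft i (ft h (tid X x)) = ft i (tid A (fo h x))" .
qed

lemma h_preserves_tcomp:
  assumes u: "u \<in> Tt X" and v: "v \<in> Tt X" and uv: "tcod X u = tdom X v"
  shows "ft h (tcomp X v u) = tcomp A (ft h v) (ft h u)"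
proof (rule faithful_tightD[OF faithful])
  have w: "tcomp X v u \<in> Tt X" "tdom X (tcomp X v u) = tdom X u" "tcod X (tcomp X v u) = tcod X v"
    using vdc_tcomp[OF X u v uv] by auto
  note hu = preserves_tight[OF h u] and hv = preserves_tight[OF h v]
  have huv: "tcod A (ft h u) = tdom A (ft h v)" using hu hv uv by simp
  note hvu = vdc_tcomp[OF A _ _ huv]
  show "ft h (tcomp X v u) \<in> Tt A" "tcomp A (ft h v) (ft h u) \<in> Tt A"
    "tdom A (ft h (tcomp X v u)) = tdom A (tcomp A (ft h v) (ft h u))"
    "tcod A (ft h (tcomp X v u)) = tcod A (tcomp A (ft h v) (ft h u))"
    using preserves_tight[OF h w(1)] w hu hv hvu by simp_all
  have "ft i (ft h (tcomp X v u)) = tcomp B (ft f v) (ft f u)"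
    using factors_tight[OF w(1)] vdf_tcomp[OF f u v uv] by simp
  also have "\<dots> = ft i (tcomp A (ft h v) (ft h u))"
    using vdf_tcomp[OF i _ _ huv] hu hv factors_tight[OF u] factors_tight[OF v] by simp
  finally show "ft i (ft h (tcomp X v u)) = ft i (tcomp A (ft h v) (ft h u))" .
qed

lemma h_preserves_cid:
  assumes p: "p \<in> Lo X"
  shows "fc h (cid X p) = cid A (fl h p)"
proof (rule faithful_cellD[OF faithful])
  have c: "cid X p \<in> Ce X" "csrc X (cid X p) = [p]" "ctgt X (cid X p) = p"
    "cleft X (cid X p) = tid X (lsrc X p)"
    using vdc_cid[OF X p] by auto
  have "lsrc X p \<in> Ob X" using vdc_loose_ends[OF X p] by simp
  note t = vdc_tid[OF X this]
  note hp = preserves_loose[OF h p]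
  have "fo h (lsrc X p) \<in> Ob A" using preserves_obj[OF h \<open>lsrc X p \<in> Ob X\<close>] .
  note c' = vdc_cid[OF A conjunct1[OF hp]] and t' = vdc_tid[OF A this]
  show "fc h (cid X p) \<in> Ce A" "cid A (fl h p) \<in> Ce A"
    "csrc A (fc h (cid X p)) = csrc A (cid A (fl h p))"
    "ctgt A (fc h (cid X p)) = ctgt A (cid A (fl h p))"
    "tdom A (cleft A (fc h (cid X p))) = tdom A (cleft A (cid A (fl h p)))"
    using preserves_cell[OF h c(1)] preserves_tight[OF h conjunct1[OF t]] c t c' t' hp by simp_all
  have "fc i (fc h (cid X p)) = cid B (fl f p)"
    using factors_cell[OF c(1)] vdf_cid[OF f p] by simp
  also have "\<dots> = fc i (cid A (fl h p))"
    using vdf_cid[OF i conjunct1[OF hp]] factors_loose[OF p] by simp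
  finally show "fc i (fc h (cid X p)) = fc i (cid A (fl h p))" .
qed

lemma h_preserves_ccomp:
  assumes c: "composable X a u bs"
  shows "fc h (ccomp X a u bs) = ccomp A (fc h a) (ft h u) (map (fc h) bs)"
proof (rule faithful_cellD[OF faithful])
  have c': "composable A (fc h a) (ft h u) (map (fc h) bs)"
    using composable_map[OF h X c] .
  from c have a: "a \<in> Ce X" and cp: "cpath X u bs (pright X u bs)"
    by (auto simp: composable_def)
  from cpath_in_carriers[OF X cp] have u: "u \<in> Tt X" and bs: "set bs \<subseteq> Ce X" by auto
  note comp = vdc_ccomp[OF X c] and comp' = vdc_ccomp[OF A c']
  have "csrc A (fc h (ccomp X a u bs)) = map (fl h) (concat (map (csrc X) bs))"
    using preserves_cell[OF h] comp by simp
  also have "\<dots> = concat (map (csrc A) (map (fc h) bs))"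
  proof -
    have "\<forall>b \<in> set bs. csrc A (fc h b) = map (fl h) (csrc X b)"
      using bs preserves_cell[OF h] by blast
    then show ?thesis by (simp add: map_concat cong: map_cong)
  qed
  finally show "csrc A (fc h (ccomp X a u bs)) = csrc A (ccomp A (fc h a) (ft h u) (map (fc h) bs))"
    using comp' by simp
  have "cleft X (ccomp X a u bs) \<in> Tt X" using vdc_cell_boundary[OF X] comp by blast
  then have "tdom A (cleft A (fc h (ccomp X a u bs))) = fo h (tdom X (cleft X (ccomp X a u bs)))"
    using preserves_cell[OF h] preserves_tight[OF h] comp by simp
  also have "\<dots> = fo h (tdom X u)" using tdom_cleft_ccomp[OF X c] by simp
  also have "\<dots> = tdom A (cleft A (ccomp A (fc h a) (ft h u) (map (fc h) bs)))"
    using tdom_cleft_ccomp[OF A c'] preserves_tight[OF h u] by simp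
  finally show "tdom A (cleft A (fc h (ccomp X a u bs))) =
      tdom A (cleft A (ccomp A (fc h a) (ft h u) (map (fc h) bs)))" .
  show "fc h (ccomp X a u bs) \<in> Ce A" "ccomp A (fc h a) (ft h u) (map (fc h) bs) \<in> Ce A"
    "ctgt A (fc h (ccomp X a u bs)) = ctgt A (ccomp A (fc h a) (ft h u) (map (fc h) bs))"
    using preserves_cell[OF h] comp comp' a by simp_all
  have "fc i (fc h (ccomp X a u bs)) = ccomp B (fc f a) (ft f u) (map (fc f) bs)"
    using factors_cell comp vdf_ccomp[OF f c] by simp
  also have "\<dots> = fc i (ccomp A (fc h a) (ft h u) (map (fc h) bs))"
  proof -
    have "map (fc f) bs = map (fc i) (map (fc h) bs)" using bs factors_cell by (auto simp: subset_iff)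
    then show ?thesis using vdf_ccomp[OF i c'] factors_cell[OF a] factors_tight[OF u] by (simp only:)
  qed
  finally show "fc i (fc h (ccomp X a u bs)) = fc i (ccomp A (fc h a) (ft h u) (map (fc h) bs))" .
qed

lemma is_vdf_h: "is_vdf X A h"
  using A X h h_preserves_tid h_preserves_tcomp h_preserves_cid h_preserves_ccomp
  unfolding is_vdf_def preserves_boundaries_def by blast

end

lemma faithful_left_cancel:
  assumes X: "is_vdc X" and inj_obj: "inj_on_objects A i" and inj_loose: "inj_on_loose A i"
    and faithful: "faithful A i"
    and h: "preserves_boundaries X A h" and h': "preserves_boundaries X A h'"
    and eq: "vdf_eq X (vdf_comp i h) (vdf_comp i h')"
  shows "vdf_eq X h h'"
proof -
  have obj: "fo h x = fo h' x" if "x \<in> Ob X" for x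
    using inj_onD[OF inj_obj[unfolded inj_on_objects_def]] eq that preserves_obj[OF h] preserves_obj[OF h']
    by (simp add: vdf_eq_def vdf_comp_def)
  have loose: "fl h p = fl h' p" if "p \<in> Lo X" for p
    using inj_onD[OF inj_loose[unfolded inj_on_loose_def]] eq that preserves_loose[OF h] preserves_loose[OF h']
    by (simp add: vdf_eq_def vdf_comp_def)
  have tight: "ft h u = ft h' u" if u: "u \<in> Tt X" for u
    using faithful_tightD[OF faithful] preserves_tight[OF h u] preserves_tight[OF h' u]
      obj vdc_tight_ends[OF X u] eq u by (simp add: vdf_eq_def vdf_comp_def)
  have cell: "fc h c = fc h' c" if c: "c \<in> Ce X" for c
  proof (rule faithful_cellD[OF faithful])
    note bd = vdc_cell_boundary[OF X c] and hc = preserves_cell[OF h c] and hc' = preserves_cell[OF h' c]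
    have "set (csrc X c) \<subseteq> Lo X" "tdom X (cleft X c) \<in> Ob X"
      using lpath_in_carriers[OF X] bd by blast+
    then show "csrc A (fc h c) = csrc A (fc h' c)"
      "tdom A (cleft A (fc h c)) = tdom A (cleft A (fc h' c))"
      using hc hc' loose obj preserves_tight[OF h] preserves_tight[OF h'] bd
      by (auto intro!: map_cong)
    show "fc h c \<in> Ce A" "fc h' c \<in> Ce A" "ctgt A (fc h c) = ctgt A (fc h' c)"
      using hc hc' loose bd by auto
    show "fc i (fc h c) = fc i (fc h' c)" using eq c by (simp add: vdf_eq_def vdf_comp_def)
  qed
  show ?thesis using obj tight loose cell by (simp add: vdf_eq_def)
qed

section \<open>Lifting along a fully faithful functor\<close>

locale image_lifting =
  fixes A :: "('ao, 'at, 'al, 'ac) vdc" and B :: "('bo, 'bt, 'bl, 'bc) vdc"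
    and X :: "('xo, 'xt, 'xl, 'xc) vdc"
    and i :: "('ao, 'at, 'al, 'ac, 'bo, 'bt, 'bl, 'bc) vdf"
    and f :: "('xo, 'xt, 'xl, 'xc, 'bo, 'bt, 'bl, 'bc) vdf"
  assumes i: "is_vdf A B i" and fully_faithful: "fully_faithful A B i"
    and inj_obj: "inj_on_objects A i" and inj_loose: "inj_on_loose A i"
    and f: "is_vdf X B f"
    and obj_image: "fo f ` Ob X \<subseteq> fo i ` Ob A" and loose_image: "fl f ` Lo X \<subseteq> fl i ` Lo A"
begin

lemma A: "is_vdc A" and X: "is_vdc X"
  using is_vdf_is_vdc i f by auto

lemma faithful: "faithful A i"
  using fully_faithful_faithful[OF A fully_faithful] .

definition lift_obj :: "'xo \<Rightarrow> 'ao" where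
  "lift_obj x = the_inv_into (Ob A) (fo i) (fo f x)"

definition lift_loose :: "'xl \<Rightarrow> 'al" where
  "lift_loose p = the_inv_into (Lo A) (fl i) (fl f p)"

definition lift_tight :: "'xt \<Rightarrow> 'at" where
  "lift_tight u = (SOME g. g \<in> Tt A \<and> tdom A g = lift_obj (tdom X u) \<and>
      tcod A g = lift_obj (tcod X u) \<and> ft i g = ft f u)"

definition lift_cell :: "'xc \<Rightarrow> 'ac" where
  "lift_cell c = (SOME d. d \<in> Ce A \<and> csrc A d = map lift_loose (csrc X c) \<and>
      tdom A (cleft A d) = lift_obj (tdom X (cleft X c)) \<and> ctgt A d = lift_loose (ctgt X c) \<and>
      fc i d = fc f c)"

definition lift :: "('xo, 'xt, 'xl, 'xc, 'ao, 'at, 'al, 'ac) vdf" where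
  "lift = \<lparr>fo = lift_obj, ft = lift_tight, fl = lift_loose, fc = lift_cell\<rparr>"

lemma lift_obj:
  assumes "x \<in> Ob X"
  shows "lift_obj x \<in> Ob A \<and> fo i (lift_obj x) = fo f x"
proof -
  have "fo f x \<in> fo i ` Ob A" using obj_image assms by blast
  then show ?thesis using inj_obj unfolding lift_obj_def inj_on_objects_def
    by (simp add: the_inv_into_into f_the_inv_into_f)
qed

lemma lift_loose:
  assumes "p \<in> Lo X"
  shows "lift_loose p \<in> Lo A \<and> fl i (lift_loose p) = fl f p"
proof -
  have "fl f p \<in> fl i ` Lo A" using loose_image assms by blast
  then show ?thesis using inj_loose unfolding lift_loose_def inj_on_loose_def
    by (simp add: the_inv_into_into f_the_inv_into_f)
qed

lemma lift_loose_ends: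
  assumes p: "p \<in> Lo X"
  shows "lsrc A (lift_loose p) = lift_obj (lsrc X p) \<and> ltgt A (lift_loose p) = lift_obj (ltgt X p)"
proof -
  note ends = vdc_loose_ends[OF X p] and lp = lift_loose[OF p]
  note ends' = vdc_loose_ends[OF A conjunct1[OF lp]]
  note bi = preserves_loose[OF is_vdf_preserves_boundaries[OF i] conjunct1[OF lp]]
    and bf = preserves_loose[OF is_vdf_preserves_boundaries[OF f] p]
  have "fo i (lsrc A (lift_loose p)) = fo i (lift_obj (lsrc X p))"
    "fo i (ltgt A (lift_loose p)) = fo i (lift_obj (ltgt X p))"
    using bi bf lp lift_obj ends by auto
  then show ?thesis
    using inj_onD[OF inj_obj[unfolded inj_on_objects_def]] ends' lift_obj ends by blast
qed

lemma lpath_lift: "lpath X x ps y \<Longrightarrow> lpath A (lift_obj x) (map lift_loose ps) (lift_obj y)"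
  by (induction ps arbitrary: x) (use lift_obj lift_loose lift_loose_ends in auto)

lemma lift_tight:
  assumes u: "u \<in> Tt X"
  shows "lift_tight u \<in> Tt A \<and> tdom A (lift_tight u) = lift_obj (tdom X u) \<and>
    tcod A (lift_tight u) = lift_obj (tcod X u) \<and> ft i (lift_tight u) = ft f u"
proof -
  note ends = vdc_tight_ends[OF X u]
  have "\<exists>g. g \<in> Tt A \<and> tdom A g = lift_obj (tdom X u) \<and> tcod A g = lift_obj (tcod X u) \<and> ft i g = ft f u"
    using fully_faithful_tight_surj[OF fully_faithful] lift_obj ends
      preserves_tight[OF is_vdf_preserves_boundaries[OF f] u] by simp
  then show ?thesis unfolding lift_tight_def by (rule someI_ex)
qed

lemma lift_cell:
  assumes c: "c \<in> Ce X"
  shows "lift_cell c \<in> Ce A \<and> csrc A (lift_cell c) = map lift_loose (csrc X c) \<and>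
    tdom A (cleft A (lift_cell c)) = lift_obj (tdom X (cleft X c)) \<and>
    ctgt A (lift_cell c) = lift_loose (ctgt X c) \<and> fc i (lift_cell c) = fc f c"
proof -
  note bd = vdc_cell_boundary[OF X c]
  have src: "set (csrc X c) \<subseteq> Lo X" and o: "tdom X (cleft X c) \<in> Ob X"
    using lpath_in_carriers[OF X] bd by blast+
  note fc = preserves_cell[OF is_vdf_preserves_boundaries[OF f] c]
  have "tdom B (cleft B (fc f c)) = fo i (lift_obj (tdom X (cleft X c)))"
    using fc preserves_tight[OF is_vdf_preserves_boundaries[OF f]] bd lift_obj[OF o] by simp
  moreover have "csrc B (fc f c) = map (fl i) (map lift_loose (csrc X c))"
    using fc src lift_loose by auto
  moreover have "ctgt B (fc f c) = fl i (lift_loose (ctgt X c))"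
    using fc lift_loose bd by simp
  ultimately have "\<exists>d. d \<in> Ce A \<and> csrc A d = map lift_loose (csrc X c) \<and>
      tdom A (cleft A d) = lift_obj (tdom X (cleft X c)) \<and> ctgt A d = lift_loose (ctgt X c) \<and> fc i d = fc f c"
    using fully_faithful_cell_surj[OF fully_faithful lpath_lift] bd lift_loose fc by blast
  then show ?thesis unfolding lift_cell_def by (rule someI_ex)
qed

lemma lift_cell_sides:
  assumes c: "c \<in> Ce X"
  shows "cleft A (lift_cell c) = lift_tight (cleft X c) \<and> cright A (lift_cell c) = lift_tight (cright X c)"
proof -
  note lc = lift_cell[OF c] and bd = vdc_cell_boundary[OF X c]
  note bd' = vdc_cell_boundary[OF A conjunct1[OF lc]]
  note bi = preserves_cell[OF is_vdf_preserves_boundaries[OF i] conjunct1[OF lc]]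
    and bf = preserves_cell[OF is_vdf_preserves_boundaries[OF f] c]
  note tl = lift_tight[of "cleft X c"] and tr = lift_tight[of "cright X c"]
  have "cleft A (lift_cell c) = lift_tight (cleft X c)"
    by (rule faithful_tightD[OF faithful]) (use lc bd bd' bi bf tl lift_loose_ends in auto)
  moreover have "cright A (lift_cell c) = lift_tight (cright X c)"
  proof (rule faithful_tightD[OF faithful])
    have "lpath A (lift_obj (tdom X (cleft X c))) (map lift_loose (csrc X c)) (lift_obj (tdom X (cright X c)))"
      using lpath_lift bd by blast
    then show "tdom A (cright A (lift_cell c)) = tdom A (lift_tight (cright X c))"
      using lc bd' tr bd lpath_end_unique by metis
  qed (use lc bd bd' bi bf tr lift_loose_ends in auto)
  ultimately show ?thesis ..
qed

lemma lift_preserves_boundaries: "preserves_boundaries X A lift"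
  unfolding preserves_boundaries_def lift_def
  using lift_obj lift_tight lift_loose lift_loose_ends lift_cell lift_cell_sides by simp

lemma lift_factors: "vdf_eq X (vdf_comp i lift) f"
  unfolding vdf_eq_def vdf_comp_def lift_def using lift_obj lift_tight lift_loose lift_cell by simp

lemma is_vdf_lift: "is_vdf X A lift"
proof -
  interpret faithful_factorization A B X i f lift
    using i faithful f lift_preserves_boundaries lift_factors by unfold_locales
  show ?thesis by (rule is_vdf_h)
qed

lemma lift_unique:
  assumes "is_vdf X A h" and "vdf_eq X (vdf_comp i h) f"
  shows "vdf_eq X lift h"
proof (rule faithful_left_cancel[OF X inj_obj inj_loose faithful lift_preserves_boundaries])
  show "preserves_boundaries X A h" using is_vdf_preserves_boundaries[OF assms(1)] .
  show "vdf_eq X (vdf_comp i lift) (vdf_comp i h)"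
    using lift_factors assms(2) by (simp add: vdf_eq_def)
qed

end

lemma fully_faithful_lift:
  assumes "is_vdf A B i" "fully_faithful A B i" "inj_on_objects A i" "inj_on_loose A i"
    and "is_vdf X B f" "fo f ` Ob X \<subseteq> fo i ` Ob A" "fl f ` Lo X \<subseteq> fl i ` Lo A"
  shows "\<exists>h. is_vdf X A h \<and> vdf_eq X (vdf_comp i h) f \<and>
    (\<forall>h'. is_vdf X A h' \<longrightarrow> vdf_eq X (vdf_comp i h') f \<longrightarrow> vdf_eq X h h')"
proof -
  interpret image_lifting A B X i f
    using assms by unfold_locales
  show ?thesis using is_vdf_lift lift_factors lift_unique by blast
qed

section \<open>A codiscrete test VDC\<close>

definition num :: "nat \<Rightarrow> 'bo + 'bt + 'bl + 'bc + nat" where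
  "num n = Inr (Inr (Inr (Inr n)))"

lemma num_eq_iff [simp]: "num m = num n \<longleftrightarrow> m = n"
  by (simp add: num_def)

definition tagged :: "nat \<Rightarrow> ('bo, 'bt, 'bl, 'bc) univ \<Rightarrow> ('bo, 'bt, 'bl, 'bc) univ" where
  "tagged n S = (\<lambda>l. num n # l) ` S"

definition untag :: "nat \<Rightarrow> ('bo, 'bt, 'bl, 'bc) univ \<Rightarrow> ('bo, 'bt, 'bl, 'bc) univ" where
  "untag n z = {l. num n # l \<in> z}"

lemma untag_tagged [simp]: "untag n (tagged m S) = (if n = m then S else {})"
  unfolding untag_def tagged_def by auto

lemma untag_Un [simp]: "untag n (S \<union> T) = untag n S \<union> untag n T"
  unfolding untag_def by auto

definition enc_pair :: "('bo, 'bt, 'bl, 'bc) univ \<Rightarrow> ('bo, 'bt, 'bl, 'bc) univ \<Rightarrow> ('bo, 'bt, 'bl, 'bc) univ"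
  where "enc_pair x y = tagged 0 x \<union> tagged 1 y"

definition enc_triple ::
  "('bo, 'bt, 'bl, 'bc) univ \<Rightarrow> ('bo, 'bt, 'bl, 'bc) univ \<Rightarrow> ('bo, 'bt, 'bl, 'bc) univ \<Rightarrow>
   ('bo, 'bt, 'bl, 'bc) univ"
  where "enc_triple x y z = tagged 0 x \<union> tagged 1 y \<union> tagged 2 z"

lemma untag_enc_pair [simp]:
  "untag 0 (enc_pair x y) = x" "untag 1 (enc_pair x y) = y" "untag (Suc 0) (enc_pair x y) = y"
  unfolding enc_pair_def by auto

lemma untag_enc_triple [simp]:
  "untag 0 (enc_triple x y z) = x" "untag 1 (enc_triple x y z) = y" "untag 2 (enc_triple x y z) = z"
  "untag (Suc 0) (enc_triple x y z) = y" "untag (Suc (Suc 0)) (enc_triple x y z) = z"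
  unfolding enc_triple_def by auto

definition enc_list :: "('bo, 'bt, 'bl, 'bc) univ list \<Rightarrow> ('bo, 'bt, 'bl, 'bc) univ" where
  "enc_list xs = {[num 0, num (length xs)]} \<union> (\<Union>j < length xs. tagged (Suc j) (xs ! j))"

definition dec_list :: "('bo, 'bt, 'bl, 'bc) univ \<Rightarrow> ('bo, 'bt, 'bl, 'bc) univ list" where
  "dec_list z = map (\<lambda>j. untag (Suc j) z) [0..<(THE n. [num 0, num n] \<in> z)]"

lemma dec_enc_list [simp]: "dec_list (enc_list xs) = xs"
proof -
  have len: "(THE n. [num 0, num n] \<in> enc_list xs) = length xs"
    by (rule the_equality) (auto simp: enc_list_def tagged_def)
  have "untag (Suc j) (enc_list xs) = xs ! j" if "j < length xs" for j
    using that by (auto simp: enc_list_def untag_def tagged_def)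
  then show ?thesis unfolding dec_list_def len
    by (intro nth_equalityI) auto
qed

definition codiscrete_loose :: "('bo, 'bt, 'bl, 'bc) univ set" where
  "codiscrete_loose = {enc_triple x y z | x y z. True}"

lemma enc_triple_codiscrete_loose [simp]: "enc_triple x y z \<in> codiscrete_loose"
  by (auto simp: codiscrete_loose_def)

fun edge_path ::
  "('bo, 'bt, 'bl, 'bc) univ \<Rightarrow> ('bo, 'bt, 'bl, 'bc) univ list \<Rightarrow> ('bo, 'bt, 'bl, 'bc) univ \<Rightarrow> bool"
where
  "edge_path x [] y \<longleftrightarrow> x = y"
| "edge_path x (p # ps) y \<longleftrightarrow> p \<in> codiscrete_loose \<and> untag 0 p = x \<and> edge_path (untag 1 p) ps y"

definition path_end :: "('bo, 'bt, 'bl, 'bc) univ \<Rightarrow> ('bo, 'bt, 'bl, 'bc) univ list \<Rightarrow> ('bo, 'bt, 'bl, 'bc) univ"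
  where "path_end x ps = foldl (\<lambda>_ p. untag 1 p) x ps"

lemma path_end_simps [simp]: "path_end x [] = x" "path_end x (p # ps) = path_end (untag 1 p) ps"
  by (simp_all add: path_end_def)

lemma edge_path_end: "edge_path x ps y \<Longrightarrow> y = path_end x ps"
  by (induction ps arbitrary: x) auto

lemma edge_path_append: "edge_path x ps y \<Longrightarrow> edge_path y qs z \<Longrightarrow> edge_path x (ps @ qs) z"
  by (induction ps arbitrary: x) auto

definition codiscrete_cells :: "('bo, 'bt, 'bl, 'bc) univ set" where
  "codiscrete_cells = {enc_triple (enc_list ps) q x | ps q x. q \<in> codiscrete_loose \<and> edge_path x ps (path_end x ps)}"

lemma codiscrete_cellsI:
  "q \<in> codiscrete_loose \<Longrightarrow> edge_path x ps (path_end x ps) \<Longrightarrow>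
   enc_triple (enc_list ps) q x \<in> codiscrete_cells"
  unfolding codiscrete_cells_def by blast

lemma codiscrete_cellE:
  assumes "c \<in> codiscrete_cells"
  obtains ps q x where "c = enc_triple (enc_list ps) q x" "q \<in> codiscrete_loose"
    "edge_path x ps (path_end x ps)"
  using assms by (auto simp: codiscrete_cells_def)

definition cell_source :: "('bo, 'bt, 'bl, 'bc) univ \<Rightarrow> ('bo, 'bt, 'bl, 'bc) univ list" where
  "cell_source z = dec_list (untag 0 z)"

lemma cell_source_enc [simp]: "cell_source (enc_triple (enc_list ps) q x) = ps"
  by (simp add: cell_source_def)

text \<open>The universal property of the cokernel pair is only available for test VDCs whose data live
  in the type \<open>univ\<close>, so the test VDC is encoded there. Every set of lists is an object, a tight
  arrow is the pair of its ends, a loose arrow is a triple (source, target, label), and a cell is the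
  triple (source path, target, domain of the left side); every frame thus holds exactly one cell.\<close>

definition codiscrete ::
  "(('bo, 'bt, 'bl, 'bc) univ, ('bo, 'bt, 'bl, 'bc) univ, ('bo, 'bt, 'bl, 'bc) univ, ('bo, 'bt, 'bl, 'bc) univ) vdc"
where
  "codiscrete = \<lparr>Ob = UNIV, Tt = {enc_pair x y | x y. True}, tdom = untag 0, tcod = untag 1,
     tid = \<lambda>x. enc_pair x x, tcomp = \<lambda>g f. enc_pair (untag 0 f) (untag 1 g),
     Lo = codiscrete_loose, lsrc = untag 0, ltgt = untag 1,
     Ce = codiscrete_cells, csrc = cell_source, ctgt = untag 1,
     cleft = \<lambda>z. enc_pair (untag 2 z) (untag 0 (untag 1 z)),
     cright = \<lambda>z. enc_pair (path_end (untag 2 z) (cell_source z)) (untag 1 (untag 1 z)),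
     cid = \<lambda>p. enc_triple (enc_list [p]) p (untag 0 p),
     ccomp = \<lambda>a f bs. enc_triple (enc_list (concat (map cell_source bs))) (untag 1 a) (untag 0 f)\<rparr>"

lemma codiscrete_simps [simp]:
  "Ob codiscrete = UNIV" "Tt codiscrete = {enc_pair x y | x y. True}"
  "tdom codiscrete = untag 0" "tcod codiscrete = untag 1"
  "tid codiscrete = (\<lambda>x. enc_pair x x)" "tcomp codiscrete = (\<lambda>g f. enc_pair (untag 0 f) (untag 1 g))"
  "Lo codiscrete = codiscrete_loose" "lsrc codiscrete = untag 0" "ltgt codiscrete = untag 1"
  "Ce codiscrete = codiscrete_cells" "csrc codiscrete = cell_source" "ctgt codiscrete = untag 1"
  "cleft codiscrete = (\<lambda>z. enc_pair (untag 2 z) (untag 0 (untag 1 z)))"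
  "cright codiscrete = (\<lambda>z. enc_pair (path_end (untag 2 z) (cell_source z)) (untag 1 (untag 1 z)))"
  "cid codiscrete = (\<lambda>p. enc_triple (enc_list [p]) p (untag 0 p))"
  "ccomp codiscrete = (\<lambda>a f bs. enc_triple (enc_list (concat (map cell_source bs))) (untag 1 a) (untag 0 f))"
  by (simp_all add: codiscrete_def)

lemma lpath_codiscrete: "lpath codiscrete x ps y \<longleftrightarrow> edge_path x ps y"
  by (induction ps arbitrary: x) auto

lemma cpath_codiscrete:
  "cpath codiscrete f bs g \<Longrightarrow> edge_path (untag 0 f) (concat (map cell_source bs)) (untag 0 g)"
proof (induction bs arbitrary: f)
  case (Cons b bs)
  then have b: "b \<in> codiscrete_cells" "cleft codiscrete b = f" "cpath codiscrete (cright codiscrete b) bs g"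
    by auto
  from b(1) obtain ps q x where "b = enc_triple (enc_list ps) q x" "edge_path x ps (path_end x ps)"
    by (rule codiscrete_cellE)
  with Cons.IH[OF b(3)] b(2) show ?case by (auto intro: edge_path_append)
qed simp

lemma pcomp_codiscrete:
  "pcompat codiscrete bs g cs \<Longrightarrow>
   concat (map cell_source (pcomp codiscrete bs g cs)) = concat (map cell_source cs)"
proof (induction bs arbitrary: g cs)
  case (Cons b bs)
  let ?k = "length (csrc codiscrete b)"
  from Cons.prems have "pcompat codiscrete bs (pright codiscrete g (take ?k cs)) (drop ?k cs)"
    by (simp add: Let_def)
  from Cons.IH[OF this] have
    "concat (map cell_source (pcomp codiscrete (b # bs) g cs)) =
     concat (map cell_source (take ?k cs)) @ concat (map cell_source (drop ?k cs))"
    by (simp add: Let_def)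
  also have "\<dots> = concat (map cell_source cs)"
    by (metis append_take_drop_id concat_append map_append)
  finally show ?case .
qed simp

lemma codiscrete_cell_boundary:
  "\<forall>c \<in> Ce codiscrete. cleft codiscrete c \<in> Tt codiscrete \<and> cright codiscrete c \<in> Tt codiscrete \<and>
    lpath codiscrete (tdom codiscrete (cleft codiscrete c)) (csrc codiscrete c)
      (tdom codiscrete (cright codiscrete c)) \<and>
    ctgt codiscrete c \<in> Lo codiscrete \<and> lsrc codiscrete (ctgt codiscrete c) = tcod codiscrete (cleft codiscrete c) \<and>
    ltgt codiscrete (ctgt codiscrete c) = tcod codiscrete (cright codiscrete c)"
  by (auto simp: lpath_codiscrete elim!: codiscrete_cellE)

lemma codiscrete_cid:
  "\<forall>p \<in> Lo codiscrete. cid codiscrete p \<in> Ce codiscrete \<and> csrc codiscrete (cid codiscrete p) = [p] \<and>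
    ctgt codiscrete (cid codiscrete p) = p \<and>
    cleft codiscrete (cid codiscrete p) = tid codiscrete (lsrc codiscrete p) \<and>
    cright codiscrete (cid codiscrete p) = tid codiscrete (ltgt codiscrete p)"
proof
  fix p assume "p \<in> Lo codiscrete"
  then obtain x y z where "p = enc_triple x y z" by (auto simp: codiscrete_loose_def)
  then show "cid codiscrete p \<in> Ce codiscrete \<and> csrc codiscrete (cid codiscrete p) = [p] \<and>
    ctgt codiscrete (cid codiscrete p) = p \<and>
    cleft codiscrete (cid codiscrete p) = tid codiscrete (lsrc codiscrete p) \<and>
    cright codiscrete (cid codiscrete p) = tid codiscrete (ltgt codiscrete p)"
    by (auto intro!: codiscrete_cellsI)
qed

lemma codiscrete_ccomp:
  "\<forall>a f bs. composable codiscrete a f bs \<longrightarrow> ccomp codiscrete a f bs \<in> Ce codiscrete \<and>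
    csrc codiscrete (ccomp codiscrete a f bs) = concat (map (csrc codiscrete) bs) \<and>
    ctgt codiscrete (ccomp codiscrete a f bs) = ctgt codiscrete a \<and>
    cleft codiscrete (ccomp codiscrete a f bs) = tcomp codiscrete (cleft codiscrete a) f \<and>
    cright codiscrete (ccomp codiscrete a f bs) = tcomp codiscrete (cright codiscrete a) (pright codiscrete f bs)"
proof (intro allI impI)
  fix a f bs assume "composable codiscrete a f bs"
  then have a: "a \<in> codiscrete_cells" and cp: "cpath codiscrete f bs (pright codiscrete f bs)"
    by (auto simp: composable_def)
  note path = cpath_codiscrete[OF cp]
  from a show "ccomp codiscrete a f bs \<in> Ce codiscrete \<and>
    csrc codiscrete (ccomp codiscrete a f bs) = concat (map (csrc codiscrete) bs) \<and>
    ctgt codiscrete (ccomp codiscrete a f bs) = ctgt codiscrete a \<and>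
    cleft codiscrete (ccomp codiscrete a f bs) = tcomp codiscrete (cleft codiscrete a) f \<and>
    cright codiscrete (ccomp codiscrete a f bs) = tcomp codiscrete (cright codiscrete a) (pright codiscrete f bs)"
    by (elim codiscrete_cellE) (auto simp: edge_path_end[OF path, symmetric] intro!: codiscrete_cellsI path)
qed

lemma is_vdc_codiscrete: "is_vdc codiscrete"
  unfolding is_vdc_def
  by (intro conjI codiscrete_cell_boundary codiscrete_cid codiscrete_ccomp)
    (auto simp: pcomp_codiscrete comp_def elim!: codiscrete_cellE)

section \<open>The cokernel pair separates the image of \<open>i\<close>\<close>

definition mark_obj ::
  "('ao, 'at, 'al, 'ac) vdc \<Rightarrow> ('ao, 'at, 'al, 'ac, 'bo, 'bt, 'bl, 'bc) vdf \<Rightarrow> nat \<Rightarrow> 'bo \<Rightarrow>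
   ('bo, 'bt, 'bl, 'bc) univ" where
  "mark_obj A i k b = {[Inl b, num (if b \<in> fo i ` Ob A then 0 else k)]}"

definition mark_loose ::
  "('ao, 'at, 'al, 'ac) vdc \<Rightarrow> ('bo, 'bt, 'bl, 'bc) vdc \<Rightarrow> ('ao, 'at, 'al, 'ac, 'bo, 'bt, 'bl, 'bc) vdf \<Rightarrow>
   nat \<Rightarrow> 'bl \<Rightarrow> ('bo, 'bt, 'bl, 'bc) univ" where
  "mark_loose A B i k p = enc_triple (mark_obj A i k (lsrc B p)) (mark_obj A i k (ltgt B p))
      {[Inr (Inr (Inl p)), num (if p \<in> fl i ` Lo A then 0 else k)]}"

definition marking ::
  "('ao, 'at, 'al, 'ac) vdc \<Rightarrow> ('bo, 'bt, 'bl, 'bc) vdc \<Rightarrow> ('ao, 'at, 'al, 'ac, 'bo, 'bt, 'bl, 'bc) vdf \<Rightarrow> nat \<Rightarrow>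
   ('bo, 'bt, 'bl, 'bc, ('bo, 'bt, 'bl, 'bc) univ, ('bo, 'bt, 'bl, 'bc) univ,
    ('bo, 'bt, 'bl, 'bc) univ, ('bo, 'bt, 'bl, 'bc) univ) vdf" where
  "marking A B i k =
    \<lparr>fo = mark_obj A i k,
     ft = \<lambda>f. enc_pair (mark_obj A i k (tdom B f)) (mark_obj A i k (tcod B f)),
     fl = mark_loose A B i k,
     fc = \<lambda>c. enc_triple (enc_list (map (mark_loose A B i k) (csrc B c))) (mark_loose A B i k (ctgt B c))
       (mark_obj A i k (tdom B (cleft B c)))\<rparr>"

lemma marking_simps [simp]:
  "fo (marking A B i k) = mark_obj A i k"
  "ft (marking A B i k) = (\<lambda>f. enc_pair (mark_obj A i k (tdom B f)) (mark_obj A i k (tcod B f)))"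
  "fl (marking A B i k) = mark_loose A B i k"
  "fc (marking A B i k) = (\<lambda>c. enc_triple (enc_list (map (mark_loose A B i k) (csrc B c)))
     (mark_loose A B i k (ctgt B c)) (mark_obj A i k (tdom B (cleft B c))))"
  by (simp_all add: marking_def)

lemma edge_path_mark:
  "lpath B x ps y \<Longrightarrow> edge_path (mark_obj A i k x) (map (mark_loose A B i k) ps) (mark_obj A i k y)"
  by (induction ps arbitrary: x) (auto simp: mark_loose_def)

lemma is_vdf_marking:
  assumes B: "is_vdc B"
  shows "is_vdf B codiscrete (marking A B i k)"
  unfolding is_vdf_def
proof (intro conjI)
  show "\<forall>c \<in> Ce B. fc (marking A B i k) c \<in> Ce codiscrete \<and>
      csrc codiscrete (fc (marking A B i k) c) = map (fl (marking A B i k)) (csrc B c) \<and>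
      ctgt codiscrete (fc (marking A B i k) c) = fl (marking A B i k) (ctgt B c) \<and>
      cleft codiscrete (fc (marking A B i k) c) = ft (marking A B i k) (cleft B c) \<and>
      cright codiscrete (fc (marking A B i k) c) = ft (marking A B i k) (cright B c)"
  proof
    fix c assume c: "c \<in> Ce B"
    note bd = vdc_cell_boundary[OF B c]
    have path: "edge_path (mark_obj A i k (tdom B (cleft B c))) (map (mark_loose A B i k) (csrc B c))
        (mark_obj A i k (tdom B (cright B c)))"
      by (rule edge_path_mark) (use bd in blast)
    note path_end = edge_path_end[OF path]
    show "fc (marking A B i k) c \<in> Ce codiscrete \<and>
      csrc codiscrete (fc (marking A B i k) c) = map (fl (marking A B i k)) (csrc B c) \<and>
      ctgt codiscrete (fc (marking A B i k) c) = fl (marking A B i k) (ctgt B c) \<and>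
      cleft codiscrete (fc (marking A B i k) c) = ft (marking A B i k) (cleft B c) \<and>
      cright codiscrete (fc (marking A B i k) c) = ft (marking A B i k) (cright B c)"
      using path path_end bd by (auto simp: mark_loose_def intro!: codiscrete_cellsI)
  qed
  show "\<forall>a f bs. composable B a f bs \<longrightarrow> fc (marking A B i k) (ccomp B a f bs) =
      ccomp codiscrete (fc (marking A B i k) a) (ft (marking A B i k) f) (map (fc (marking A B i k)) bs)"
    using vdc_ccomp[OF B] tdom_cleft_ccomp[OF B] by (simp add: map_concat comp_def)
qed (use B is_vdc_codiscrete in \<open>auto simp: is_vdc_def mark_loose_def\<close>)

lemma mark_loose_image:
  assumes i: "is_vdf A B i" and p: "p \<in> Lo A"
  shows "mark_loose A B i k (fl i p) = enc_triple {[Inl (fo i (lsrc A p)), num 0]}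
    {[Inl (fo i (ltgt A p)), num 0]} {[Inr (Inr (Inl (fl i p))), num 0]}"
  using preserves_loose[OF is_vdf_preserves_boundaries[OF i] p]
    vdc_loose_ends[OF conjunct1[OF is_vdf_is_vdc[OF i]] p] p
  by (simp add: mark_loose_def mark_obj_def)

lemma markings_agree_on_image:
  assumes i: "is_vdf A B i"
  shows "vdf_eq A (vdf_comp (marking A B i 1) i) (vdf_comp (marking A B i 2) i)"
proof -
  note A = conjunct1[OF is_vdf_is_vdc[OF i]] and bi = is_vdf_preserves_boundaries[OF i]
  have tight: "ft (marking A B i 1) (ft i u) = ft (marking A B i 2) (ft i u)" if u: "u \<in> Tt A" for u
    using preserves_tight[OF bi u] vdc_tight_ends[OF A u] by (simp add: mark_obj_def)
  have cell: "fc (marking A B i 1) (fc i c) = fc (marking A B i 2) (fc i c)" if c: "c \<in> Ce A" for c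
  proof -
    note bd = vdc_cell_boundary[OF A c] and ic = preserves_cell[OF bi c]
    have "set (csrc A c) \<subseteq> Lo A" "tdom A (cleft A c) \<in> Ob A"
      using lpath_in_carriers[OF A] bd by blast+
    then have "map (mark_loose A B i 1) (csrc B (fc i c)) = map (mark_loose A B i 2) (csrc B (fc i c))"
      and "mark_obj A i 1 (tdom B (cleft B (fc i c))) = mark_obj A i 2 (tdom B (cleft B (fc i c)))"
      using ic preserves_tight[OF bi] bd mark_loose_image[OF i] by (auto simp: mark_obj_def)
    moreover have "mark_loose A B i 1 (ctgt B (fc i c)) = mark_loose A B i 2 (ctgt B (fc i c))"
      using ic mark_loose_image[OF i] bd by simp
    ultimately show ?thesis by (simp only: marking_simps)
  qed
  show ?thesis
    unfolding vdf_eq_def vdf_comp_def using mark_loose_image[OF i] tight cell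
    by (simp add: mark_obj_def)
qed

lemma cokernel_pair_equalizes_only_image:
  assumes cok: "is_cokernel_pair A B i C q1 q2"
  shows "\<lbrakk>b \<in> Ob B; fo q1 b = fo q2 b\<rbrakk> \<Longrightarrow> b \<in> fo i ` Ob A"
    and "\<lbrakk>p \<in> Lo B; fl q1 p = fl q2 p\<rbrakk> \<Longrightarrow> p \<in> fl i ` Lo A"
proof -
  have i: "is_vdf A B i" using cok by (simp add: is_cokernel_pair_def)
  note B = conjunct2[OF is_vdf_is_vdc[OF i]]
  obtain h where h1: "vdf_eq B (vdf_comp h q1) (marking A B i 1)"
    and h2: "vdf_eq B (vdf_comp h q2) (marking A B i 2)"
    using cok is_vdf_marking[OF B] markings_agree_on_image[OF i]
    unfolding is_cokernel_pair_def by meson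
  show "b \<in> fo i ` Ob A" if "b \<in> Ob B" and "fo q1 b = fo q2 b"
  proof -
    have "mark_obj A i 1 b = fo h (fo q1 b)" using h1 that(1) by (simp add: vdf_eq_def vdf_comp_def)
    also have "\<dots> = mark_obj A i 2 b" using h2 that by (simp add: vdf_eq_def vdf_comp_def)
    finally have "mark_obj A i 1 b = mark_obj A i 2 b" .
    then show ?thesis by (auto simp: mark_obj_def split: if_splits)
  qed
  show "p \<in> fl i ` Lo A" if "p \<in> Lo B" and "fl q1 p = fl q2 p"
  proof -
    have "mark_loose A B i 1 p = fl h (fl q1 p)" using h1 that(1) by (simp add: vdf_eq_def vdf_comp_def)
    also have "\<dots> = mark_loose A B i 2 p" using h2 that by (simp add: vdf_eq_def vdf_comp_def)
    finally have "mark_loose A B i 1 p = mark_loose A B i 2 p" .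
    then have "untag 2 (mark_loose A B i 1 p) = untag 2 (mark_loose A B i 2 p)" by simp
    then show ?thesis by (auto simp: mark_loose_def split: if_splits)
  qed
qed

theorem lemma5p16:
  fixes A :: "('ao, 'at, 'al, 'ac) vdc"
    and B :: "('bo, 'bt, 'bl, 'bc) vdc"
    and i :: "('ao, 'at, 'al, 'ac, 'bo, 'bt, 'bl, 'bc) vdf"
    and C :: "('co, 'ct, 'cl, 'cc) vdc"
    and q1 q2 :: "('bo, 'bt, 'bl, 'bc, 'co, 'ct, 'cl, 'cc) vdf"
  assumes "is_vdf A B i"
    and "fully_faithful A B i"
    and "inj_on_objects A i"
    and "inj_on_loose A i"
    and "is_cokernel_pair A B i C q1 q2"
  shows "vdf_eq A (vdf_comp q1 i) (vdf_comp q2 i) \<and>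
         (\<forall>X :: ('xo, 'xt, 'xl, 'xc) vdc. is_vdc X \<longrightarrow> equalizer_test A B i q1 q2 X)"
proof
  show "vdf_eq A (vdf_comp q1 i) (vdf_comp q2 i)"
    using assms(5) by (simp add: is_cokernel_pair_def)
  show "\<forall>X :: ('xo, 'xt, 'xl, 'xc) vdc. is_vdc X \<longrightarrow> equalizer_test A B i q1 q2 X"
    unfolding equalizer_test_def
  proof (intro allI impI)
    fix X :: "('xo, 'xt, 'xl, 'xc) vdc" and f
    assume f: "is_vdf X B f" and equalized: "vdf_eq X (vdf_comp q1 f) (vdf_comp q2 f)"
    note bf = is_vdf_preserves_boundaries[OF f]
    have "fo f ` Ob X \<subseteq> fo i ` Ob A"
      using cokernel_pair_equalizes_only_image(1)[OF assms(5)] preserves_obj[OF bf] equalized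
      by (auto simp: vdf_eq_def vdf_comp_def)
    moreover have "fl f ` Lo X \<subseteq> fl i ` Lo A"
      using cokernel_pair_equalizes_only_image(2)[OF assms(5)] preserves_loose[OF bf] equalized
      by (auto simp: vdf_eq_def vdf_comp_def)
    ultimately show "\<exists>h. is_vdf X A h \<and> vdf_eq X (vdf_comp i h) f \<and>
        (\<forall>h'. is_vdf X A h' \<longrightarrow> vdf_eq X (vdf_comp i h') f \<longrightarrow> vdf_eq X h h')"
      using fully_faithful_lift[OF assms(1-4) f] by blast
  qed
qed

end
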